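(* Let $n,m$ be integers with either $m=n-1\geq 0$ or $m=n-2\geq 0$, and let $H(s)=Q_{nm}(s)/P_{nm}(s)$ be the $(n,m)$ Padé approximant of $e^{-s}$. Then $H$ yields a maximally flat delay approximation of order $m+1$: its group delay satisfies $$t_d(\omega)=1+c\,\omega^{2(m+1)}+O(\omega^{2m+4})\quad(\omega\to 0)$$ for some constant $c\neq 0$.
   Context: The $(n,m)$ Padé approximant of $e^{-s}$ is $Q_{nm}(s)/P_{nm}(s)$ with $Q_{nm}(s)=\frac{n!}{(n+m)!}\sum_{k=0}^{m}\binom{m}{k}\frac{(n+k)!}{n!}(-s)^{m-k}$ and $P_{nm}(s)=\frac{m!}{(n+m)!}\sum_{k=0}^{n}\binom{n}{k}\frac{(m+k)!}{m!}s^{n-k}$ (equivalently, the unique rational function with $\deg Q\le m$, $\deg P\le n$, $P(0)=1$, $P(s)e^{-s}-Q(s)=O(s^{n+m+1})$). For a real rational function $H$, its group delay is $t_d(\omega)=-\frac{d}{d\omega}\arg H(j\omega)$, an even function of $\omega$. A delay approximation of unit delay is called maximally flat of order $k$ if, apart from the constant term $1$, the Taylor expansion of $t_d(\omega)$ about $\omega=0$ begins with the term in $\omega^{2k}$. *)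

theory Defs
  imports "HOL-Analysis.Analysis" "HOL-Library.Landau_Symbols"
begin

definition padeQ :: "nat \<Rightarrow> nat \<Rightarrow> complex \<Rightarrow> complex" where
  "padeQ n m s = (fact n / fact (n + m)) *
     (\<Sum>k = 0..m. of_nat (m choose k) * (fact (n + k) / fact n) * (- s) ^ (m - k))"

definition padeP :: "nat \<Rightarrow> nat \<Rightarrow> complex \<Rightarrow> complex" where
  "padeP n m s = (fact m / fact (n + m)) *
     (\<Sum>k = 0..n. of_nat (n choose k) * (fact (m + k) / fact m) * s ^ (n - k))"

definition padeH :: "nat \<Rightarrow> nat \<Rightarrow> complex \<Rightarrow> complex" where
  "padeH n m s = padeQ n m s / padeP n m s"

definition group_delay :: "(complex \<Rightarrow> complex) \<Rightarrow> real \<Rightarrow> real" where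
  "group_delay H w = - deriv (\<lambda>x. Arg (H (\<i> * complex_of_real x))) w"

end

theory Submission
  imports Defs
begin

(* Write N = n + m.  Reversing the order of summation, the Pade denominator P and numerator Q are
   the Kummer polynomials sum_j C(r,j) (N-j)!/N! (sigma s)^j with (sigma, r) = (1, n) resp. (-1, m).
   Their coefficients obey a two-term recurrence, i.e. Kummer's equation
   s y'' = N y' + sigma s y' - sigma r y.  Combining the two equations, the delay numerator
   W = P Q' - Q P' + P Q satisfies Euler's equation s W' = N W, hence W = kappa s^N with
   kappa = lead P * lead Q, a nonzero real number.

   Differentiating Arg ((Q/P)(ix)) gives the group delay t_d(x) = 1 - Re (W(ix) / (P Q)(ix)), so
   t_d(x) - 1 = - kappa Re ((ix)^N / G(ix)) with G = P Q.  Since G has real coefficients,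
   G(0) = 1 and G'(0) = (n - m)/N, the real part of 1/G(ix) is 1 + O(x^2) and its imaginary
   part is - G'(0) x + O(x^3).  For N = 2m+1 the factor (ix)^N is imaginary and G'(0) = 1/N
   gives the leading term; for N = 2m+2 it is real and the constant 1 gives it.  In both cases
   the error after the x^(2m+2) term is O(x^(2m+4)). *)

(* The coefficients of the Pade polynomials after reversing the order of summation:
   kummer_coeff sigma r N j = sigma^j C(r,j) (N-j)!/N!. *)
definition kummer_coeff :: "real \<Rightarrow> nat \<Rightarrow> nat \<Rightarrow> nat \<Rightarrow> real" where
  "kummer_coeff \<sigma> r N j = \<sigma> ^ j * real (r choose j) * fact (N - j) / fact N"

(* The polynomial sum_{j<=r} kummer_coeff sigma r N j * s^j, i.e. the terminating hypergeometric
   series 1F1(-r; -N; sigma s). *)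
definition kummer_poly :: "real \<Rightarrow> nat \<Rightarrow> nat \<Rightarrow> complex poly" where
  "kummer_poly \<sigma> r N = (\<Sum>j\<le>r. monom (complex_of_real (kummer_coeff \<sigma> r N j)) j)"

(* Coefficients vanish beyond degree r, so the finite sum is the full coefficient sequence. *)
lemma coeff_kummer_poly: "coeff (kummer_poly \<sigma> r N) j = complex_of_real (kummer_coeff \<sigma> r N j)"
  by (cases "j \<le> r") (auto simp: kummer_poly_def kummer_coeff_def coeff_sum coeff_monom binomial_eq_0)

(* Reversing the summation (k = r - j) turns the textbook formula into the Kummer polynomial. *)
lemma poly_kummer_poly:
  assumes "r + t = N"
  shows "poly (kummer_poly \<sigma> r N) z =
    (fact t / fact N) * (\<Sum>k = 0..r. of_nat (r choose k) * (fact (t + k) / fact t) * (of_real \<sigma> * z) ^ (r - k))"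
proof -
  have "(fact t / fact N) * (\<Sum>k = 0..r. of_nat (r choose k) * (fact (t + k) / fact t) * (of_real \<sigma> * z) ^ (r - k))
      = (\<Sum>j = 0..r. (fact t / fact N) * (of_nat (r choose (r - j)) * (fact (t + (r - j)) / fact t) * (of_real \<sigma> * z) ^ (r - (r - j))))"
    by (subst sum.atLeastAtMost_rev) (simp add: sum_distrib_left)
  also have "\<dots> = (\<Sum>j = 0..r. complex_of_real (kummer_coeff \<sigma> r N j) * z ^ j)"
  proof (rule sum.cong)
    fix j assume "j \<in> {0..r}"
    then have "r - (r - j) = j" "t + (r - j) = N - j" "r choose (r - j) = r choose j"
      using assms by (auto simp: binomial_symmetric[symmetric])
    then show "(fact t / fact N) * (of_nat (r choose (r - j)) * (fact (t + (r - j)) / fact t) * (of_real \<sigma> * z) ^ (r - (r - j)))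
        = complex_of_real (kummer_coeff \<sigma> r N j) * z ^ j"
      by (simp add: kummer_coeff_def power_mult_distrib field_simps)
  qed simp
  finally show ?thesis
    by (simp add: kummer_poly_def poly_sum poly_monom atLeast0AtMost)
qed

lemma padeP_kummer: "padeP n m = poly (kummer_poly 1 n (n + m))"
  by (rule ext) (simp add: padeP_def poly_kummer_poly[of n m])

lemma padeQ_kummer: "padeQ n m = poly (kummer_poly (-1) m (n + m))"
  by (rule ext) (simp add: padeQ_def poly_kummer_poly[of m n])

(* Two-term recurrence of the coefficients; it is Kummer's differential equation read off
   coefficientwise. *)
lemma kummer_coeff_recurrence:
  assumes "r \<le> N"
  shows "real (Suc j) * (real j - real N) * kummer_coeff \<sigma> r N (Suc j)
       = \<sigma> * (real j - real r) * kummer_coeff \<sigma> r N j"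
proof (cases "j < r")
  case True
  have "Suc j * (r choose Suc j) = (r - j) * (r choose j)"
    using times_binomial_minus1_eq[of "Suc j" r] binomial_absorb_comp[of r j] by simp
  then have binom: "real (Suc j) * real (r choose Suc j) = real (r - j) * real (r choose j)"
    by (metis of_nat_mult)
  have fact_step: "fact (N - j) = real (N - j) * fact (N - Suc j)"
    using True assms by (simp add: fact_reduce Suc_diff_Suc)
  have "real (Suc j) * (real j - real N) * kummer_coeff \<sigma> r N (Suc j)
      = \<sigma> ^ Suc j * (real j - real N) * (real (Suc j) * real (r choose Suc j)) * fact (N - Suc j) / fact N"
    by (simp add: kummer_coeff_def)
  also have "\<dots> = \<sigma> ^ Suc j * (real j - real r) * real (r choose j) * (real (N - j) * fact (N - Suc j)) / fact N"
    unfolding binom using True assms by (simp add: of_nat_diff algebra_simps)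
  also have "\<dots> = \<sigma> * (real j - real r) * kummer_coeff \<sigma> r N j"
    by (simp add: kummer_coeff_def fact_step)
  finally show ?thesis .
next
  case False
  then show ?thesis
    by (cases "j = r") (auto simp: kummer_coeff_def binomial_eq_0)
qed

lemma ode_from_recurrence:
  fixes p :: "complex poly" and \<sigma> :: complex and N r :: nat
  assumes "\<And>j. of_nat (Suc j) * (of_nat j - of_nat N) * coeff p (Suc j) = \<sigma> * (of_nat j - of_nat r) * coeff p j"
  shows "pCons 0 (pderiv (pderiv p)) = smult (of_nat N) (pderiv p) + smult \<sigma> (pCons 0 (pderiv p)) - smult (\<sigma> * of_nat r) p"
proof (rule poly_eqI)
  fix j
  show "coeff (pCons 0 (pderiv (pderiv p))) j
      = coeff (smult (of_nat N) (pderiv p) + smult \<sigma> (pCons 0 (pderiv p)) - smult (\<sigma> * of_nat r) p) j"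
    using assms[of j] by (cases j) (simp_all add: coeff_pderiv algebra_simps)
qed

lemma kummer_ode:
  fixes \<sigma> :: real
  assumes "r \<le> N"
  defines "p \<equiv> kummer_poly \<sigma> r N"
  shows "pCons 0 (pderiv (pderiv p))
       = smult (of_nat N) (pderiv p) + smult (of_real \<sigma>) (pCons 0 (pderiv p)) - smult (of_real \<sigma> * of_nat r) p"
proof (rule ode_from_recurrence)
  fix j
  have "complex_of_real (real (Suc j) * (real j - real N) * kummer_coeff \<sigma> r N (Suc j))
      = complex_of_real (\<sigma> * (real j - real r) * kummer_coeff \<sigma> r N j)"
    using kummer_coeff_recurrence[OF assms(1)] by simp
  then show "of_nat (Suc j) * (of_nat j - of_nat N) * coeff p (Suc j) = of_real \<sigma> * (of_nat j - of_nat r) * coeff p j"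
    by (simp add: p_def coeff_kummer_poly)
qed

(* For H = Q/P the group delay on the imaginary axis is 1 - Re (W / (P Q)) with
   W = P Q' - Q P' + P Q (see group_delay_rational). *)
definition delay_numerator :: "complex poly \<Rightarrow> complex poly \<Rightarrow> complex poly" where
  "delay_numerator P Q = P * pderiv Q - Q * pderiv P + P * Q"

lemma euler_ode_monomial:
  fixes p :: "'a::{idom, ring_char_0} poly"
  assumes "pCons 0 (pderiv p) = smult (of_nat N) p"
  shows "p = monom (coeff p N) N"
proof (rule poly_eqI)
  fix j
  have "of_nat j * coeff p j = coeff (pCons 0 (pderiv p)) j"
    by (cases j) (simp_all add: coeff_pderiv)
  also have "\<dots> = of_nat N * coeff p j"
    by (simp add: assms)
  finally have "(of_nat j - of_nat N) * coeff p j = (0 :: 'a)"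
    by (simp add: algebra_simps)
  then show "coeff p j = coeff (monom (coeff p N) N) j"
    by (auto simp: coeff_monom)
qed

(* The algebraic core: if P and Q satisfy the Kummer equations with parameters (1, a) and
   (-1, b), then W = P Q' - Q P' + P Q satisfies s W' = (a + b) W.  Here X plays the role of s and
   P1, P2 (Q1, Q2) of the first and second derivatives. *)
lemma wronskian_ring_identity:
  fixes X P Q P1 Q1 P2 Q2 a b :: "'a::comm_ring_1"
  assumes "X * P2 = (a + b) * P1 + X * P1 - a * P"
      and "X * Q2 = (a + b) * Q1 - X * Q1 + b * Q"
  shows "X * ((P * Q2 + Q1 * P1) - (Q * P2 + P1 * Q1) + (P * Q1 + Q * P1)) = (a + b) * (P * Q1 - Q * P1 + P * Q)"
proof -
  have "X * ((P * Q2 + Q1 * P1) - (Q * P2 + P1 * Q1) + (P * Q1 + Q * P1))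
      = P * (X * Q2) - Q * (X * P2) + X * (P * Q1 + Q * P1)"
    by (simp add: algebra_simps)
  also have "\<dots> = (a + b) * (P * Q1 - Q * P1 + P * Q)"
    unfolding assms by (simp add: algebra_simps)
  finally show ?thesis .
qed

lemma delay_numerator_pade_ode:
  fixes n m :: nat
  defines "P \<equiv> kummer_poly 1 n (n + m)" and "Q \<equiv> kummer_poly (-1) m (n + m)"
  shows "pCons 0 (pderiv (delay_numerator P Q)) = smult (of_nat (n + m)) (delay_numerator P Q)"
proof -
  have X: "[:0, 1:] * p = pCons 0 p" and C: "[:c:] * p = smult c p" for c and p :: "complex poly"
    by simp_all
  have N: "[:of_nat (n + m) :: complex:] = [:of_nat n:] + [:of_nat m:]"
    by simp
  have eP: "[:0, 1:] * pderiv (pderiv P) = ([:of_nat n:] + [:of_nat m:]) * pderiv P + [:0, 1:] * pderiv P - [:of_nat n:] * P"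
    using kummer_ode[of n "n + m" 1] unfolding P_def X C N[symmetric] by simp
  have eQ: "[:0, 1:] * pderiv (pderiv Q) = ([:of_nat n:] + [:of_nat m:]) * pderiv Q - [:0, 1:] * pderiv Q + [:of_nat m:] * Q"
    using kummer_ode[of m "n + m" "-1"] unfolding Q_def X C N[symmetric] by (simp add: algebra_simps)
  have "[:0, 1:] * pderiv (delay_numerator P Q) = ([:of_nat n:] + [:of_nat m:]) * delay_numerator P Q"
    unfolding delay_numerator_def pderiv_add pderiv_diff pderiv_mult
    by (rule wronskian_ring_identity[OF eP eQ])
  then show ?thesis
    unfolding X C N[symmetric] .
qed

lemma degree_kummer_poly:
  assumes "r \<le> N" and "\<sigma> \<noteq> 0"
  shows "degree (kummer_poly \<sigma> r N) = r"
proof (rule antisym)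
  show "degree (kummer_poly \<sigma> r N) \<le> r"
    by (rule degree_le) (simp add: coeff_kummer_poly kummer_coeff_def binomial_eq_0)
  show "r \<le> degree (kummer_poly \<sigma> r N)"
    by (rule le_degree) (simp add: coeff_kummer_poly kummer_coeff_def assms(2))
qed

(* Differentiating one factor lowers the degree of a product, so the top coefficient vanishes. *)
lemma coeff_mult_pderiv_top:
  fixes p q :: "'a::{idom, ring_char_0} poly"
  shows "coeff (p * pderiv q) (degree p + degree q) = 0"
proof (cases "degree q = 0")
  case True
  then have "pderiv q = 0"
    by (simp add: pderiv_eq_0_iff)
  then show ?thesis by simp
next
  case False
  have "degree (p * pderiv q) \<le> degree p + (degree q - 1)"
    using degree_mult_le[of p "pderiv q"] by (simp add: degree_pderiv)
  with False show ?thesis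
    by (intro coeff_eq_0) linarith
qed

lemma coeff_delay_numerator_top:
  "coeff (delay_numerator P Q) (degree P + degree Q) = lead_coeff P * lead_coeff Q"
  using coeff_mult_pderiv_top[of P Q] coeff_mult_pderiv_top[of Q P]
  by (simp add: delay_numerator_def coeff_mult_degree_sum add.commute)

lemma delay_numerator_pade:
  fixes n m :: nat
  defines "P \<equiv> kummer_poly 1 n (n + m)" and "Q \<equiv> kummer_poly (-1) m (n + m)"
  shows "delay_numerator P Q
       = monom (complex_of_real (kummer_coeff 1 n (n + m) n * kummer_coeff (-1) m (n + m) m)) (n + m)"
proof -
  have "degree P = n" "degree Q = m"
    by (simp_all add: P_def Q_def degree_kummer_poly)
  then have "coeff (delay_numerator P Q) (n + m) = lead_coeff P * lead_coeff Q"
    using coeff_delay_numerator_top by metis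
  also have "\<dots> = complex_of_real (kummer_coeff 1 n (n + m) n * kummer_coeff (-1) m (n + m) m)"
    by (simp add: \<open>degree P = n\<close> \<open>degree Q = m\<close>) (simp add: P_def Q_def coeff_kummer_poly)
  finally show ?thesis
    using euler_ode_monomial[OF delay_numerator_pade_ode[of n m]] by (simp add: P_def Q_def)
qed

lemma arg_rational_has_derivative:
  fixes P Q :: "complex poly" and x :: real
  defines "z \<equiv> \<i> * complex_of_real x"
  assumes P0: "poly P z \<noteq> 0" and Q0: "poly Q z \<noteq> 0" and slit: "poly Q z / poly P z \<notin> \<real>\<^sub>\<le>\<^sub>0"
  shows "((\<lambda>t. Arg (poly Q (\<i> * of_real t) / poly P (\<i> * of_real t))) has_real_derivative
           Re (poly (delay_numerator P Q) z / (poly P z * poly Q z)) - 1) (at x)"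
proof -
  define H where "H = (\<lambda>w. poly Q (\<i> * w) / poly P (\<i> * w))"
  define D where "D = ((poly (pderiv Q) z * \<i>) * poly P z - poly Q z * (poly (pderiv P) z * \<i>)) / (poly P z * poly P z)"
  have dQ: "((\<lambda>w. poly Q (\<i> * w)) has_field_derivative poly (pderiv Q) z * \<i>) (at (of_real x))"
    unfolding z_def by (rule DERIV_chain2[OF poly_DERIV DERIV_cmult_Id])
  have dP: "((\<lambda>w. poly P (\<i> * w)) has_field_derivative poly (pderiv P) z * \<i>) (at (of_real x))"
    unfolding z_def by (rule DERIV_chain2[OF poly_DERIV DERIV_cmult_Id])
  have dH: "(H has_field_derivative D) (at (of_real x))"
    unfolding H_def D_def using DERIV_divide[OF dQ dP] P0 unfolding z_def by simp
  have Hx: "H (of_real x) = poly Q z / poly P z"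
    by (simp add: H_def z_def)
  have dLn: "((\<lambda>w. Ln (H w)) has_field_derivative inverse (H (of_real x)) * D) (at (of_real x))"
    by (rule DERIV_chain2[OF has_field_derivative_Ln dH]) (use slit in \<open>simp add: Hx\<close>)
  have "inverse (H (of_real x)) * D = \<i> * (poly (delay_numerator P Q) z / (poly P z * poly Q z) - 1)"
    using P0 Q0 unfolding Hx D_def delay_numerator_def by (simp add: field_simps)
  then have dIm: "((\<lambda>t. Im (Ln (H (of_real t)))) has_real_derivative
      Re (poly (delay_numerator P Q) z / (poly P z * poly Q z)) - 1) (at x)"
    using has_field_derivative_Im[OF has_vector_derivative_real_field[OF dLn]] by simp
  define S where "S = {t::real. poly P (\<i> * of_real t) \<noteq> 0 \<and> poly Q (\<i> * of_real t) \<noteq> 0}"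
  have "open S"
    unfolding S_def by (intro open_Collect_conj open_Collect_neq continuous_intros)
  moreover have "x \<in> S"
    using P0 Q0 by (simp add: S_def z_def)
  moreover have "Im (Ln (H (of_real t))) = Arg (poly Q (\<i> * of_real t) / poly P (\<i> * of_real t))" if "t \<in> S" for t
    using that by (simp add: S_def H_def Arg_eq_Im_Ln)
  ultimately show ?thesis
    by (rule has_field_derivative_transform_within_open[OF dIm])
qed

lemma near_one_on_imaginary_axis:
  fixes P Q :: "complex poly"
  assumes "poly P 0 = 1" "poly Q 0 = 1"
  shows "eventually (\<lambda>x::real. poly P (\<i> * of_real x) \<noteq> 0 \<and> poly Q (\<i> * of_real x) \<noteq> 0 \<and>
      poly Q (\<i> * of_real x) / poly P (\<i> * of_real x) \<notin> \<real>\<^sub>\<le>\<^sub>0) (at 0)"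
proof -
  have tP: "((\<lambda>x::real. poly P (\<i> * of_real x)) \<longlongrightarrow> 1) (at 0)"
    using assms by (intro tendsto_eq_intros) auto
  have tQ: "((\<lambda>x::real. poly Q (\<i> * of_real x)) \<longlongrightarrow> 1) (at 0)"
    using assms by (intro tendsto_eq_intros) auto
  have slit: "w \<notin> \<real>\<^sub>\<le>\<^sub>0" if "dist w 1 < 1" for w :: complex
    using that abs_Re_le_cmod[of "w - 1"] by (auto simp: dist_norm complex_nonpos_Reals_iff)
  have "eventually (\<lambda>x. poly P (\<i> * of_real x) \<noteq> 0) (at (0::real))"
    by (rule tendsto_imp_eventually_ne[OF tP]) simp
  moreover have "eventually (\<lambda>x. poly Q (\<i> * of_real x) \<noteq> 0) (at (0::real))"
    by (rule tendsto_imp_eventually_ne[OF tQ]) simp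
  moreover have "eventually (\<lambda>x. dist (poly Q (\<i> * of_real x) / poly P (\<i> * of_real x)) 1 < 1) (at (0::real))"
    using tendsto_divide[OF tQ tP] by (intro tendstoD) simp_all
  ultimately show ?thesis
    by eventually_elim (use slit in blast)
qed

lemma group_delay_rational:
  fixes P Q :: "complex poly"
  assumes "poly P 0 = 1" "poly Q 0 = 1"
  shows "eventually (\<lambda>x. group_delay (\<lambda>s. poly Q s / poly P s) x
     = 1 - Re (poly (delay_numerator P Q) (\<i> * of_real x) / (poly P (\<i> * of_real x) * poly Q (\<i> * of_real x)))) (at 0)"
  using near_one_on_imaginary_axis[OF assms]
proof eventually_elim
  case (elim x)
  have "deriv (\<lambda>t. Arg (poly Q (\<i> * of_real t) / poly P (\<i> * of_real t))) x
      = Re (poly (delay_numerator P Q) (\<i> * of_real x) / (poly P (\<i> * of_real x) * poly Q (\<i> * of_real x))) - 1"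
    using elim by (intro DERIV_imp_deriv arg_rational_has_derivative) auto
  then show ?case
    by (simp add: group_delay_def)
qed

lemma bigo_mult_convergent:
  fixes g h :: "'a \<Rightarrow> 'b::real_normed_field"
  assumes "(h \<longlongrightarrow> c) F"
  shows "(\<lambda>x. g x * h x) \<in> O[F](g)"
proof -
  have "h \<in> O[F](\<lambda>_. 1)"
    using assms by (intro bigoI_tendsto[where c = c]) simp_all
  then show ?thesis
    using landau_o.big.mult_left[of h F "\<lambda>_. 1" g] by simp
qed

lemma poly_cube_remainder:
  fixes R :: "'a::comm_ring_1 poly"
  assumes "coeff R 0 = 0" "coeff R 1 = 0" "coeff R 2 = 0"
  obtains S where "\<And>z. poly R z = z ^ 3 * poly S z"
proof -
  have "\<forall>k<3. coeff R k = 0"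
    using assms by (auto simp: less_Suc_eq numeral_3_eq_3 numeral_2_eq_2)
  then have "monom 1 3 dvd R"
    by (simp add: monom_1_dvd_iff')
  then obtain S where "R = monom 1 3 * S"
    by (rule dvdE)
  then show ?thesis
    using that by (simp add: poly_monom)
qed

(* Quadratic Taylor expansion of 1/G with an explicit remainder, for G(0) = 1 over any field:
   1 - T G is divisible by s^3, where T is the quadratic Taylor polynomial of 1/G. *)
lemma inverse_poly_quadratic_taylor:
  fixes G :: "'a::field poly"
  assumes G0: "coeff G 0 = 1"
  obtains S where "\<And>z. poly G z \<noteq> 0 \<Longrightarrow>
    1 / poly G z = 1 - coeff G 1 * z + (coeff G 1 ^ 2 - coeff G 2) * z ^ 2 + z ^ 3 * (poly S z / poly G z)"
proof -
  define T where "T = [:1, - coeff G 1, coeff G 1 ^ 2 - coeff G 2:]"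
  have "coeff (1 - T * G) 0 = 0" "coeff (1 - T * G) 1 = 0" "coeff (1 - T * G) 2 = 0"
    by (simp_all add: T_def coeff_mult G0 numeral_2_eq_2 power2_eq_square algebra_simps)
  then obtain S where S: "\<And>z. poly (1 - T * G) z = z ^ 3 * poly S z"
    using poly_cube_remainder by blast
  have "1 / poly G z = 1 - coeff G 1 * z + (coeff G 1 ^ 2 - coeff G 2) * z ^ 2 + z ^ 3 * (poly S z / poly G z)"
    if "poly G z \<noteq> 0" for z
    using S[of z] that by (simp add: T_def field_simps power2_eq_square)
  then show ?thesis
    using that by blast
qed

lemma inverse_poly_on_imaginary_axis:
  fixes G :: "complex poly"
  assumes G0: "coeff G 0 = 1" and G1: "Im (coeff G 1) = 0" and G2: "Im (coeff G 2) = 0"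
  defines "u \<equiv> \<lambda>x::real. 1 / poly G (\<i> * of_real x)"
  shows "(\<lambda>x. Re (u x) - 1) \<in> O[at 0](\<lambda>x. x ^ 2)"
    and "(\<lambda>x. Im (u x) + Re (coeff G 1) * x) \<in> O[at 0](\<lambda>x. x ^ 3)"
proof -
  define a where "a = Re (coeff G 1)"
  define b where "b = a ^ 2 - Re (coeff G 2)"
  have "coeff G 1 = of_real a" and "coeff G 2 = of_real (a ^ 2 - b)"
    using G1 G2 by (simp_all add: a_def b_def complex_eq_iff)
  then have quadratic_coeff: "coeff G 1 ^ 2 - coeff G 2 = of_real b"
    by simp
  obtain S where S: "\<And>z. poly G z \<noteq> 0 \<Longrightarrow>
      1 / poly G z = 1 - coeff G 1 * z + (coeff G 1 ^ 2 - coeff G 2) * z ^ 2 + z ^ 3 * (poly S z / poly G z)"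
    using inverse_poly_quadratic_taylor[OF G0] by blast
  define E where "E = (\<lambda>x::real. poly S (\<i> * of_real x) / poly G (\<i> * of_real x))"
  have pG0: "poly G 0 = 1"
    using G0 by (simp add: poly_0_coeff_0)
  have tG: "((\<lambda>x::real. poly G (\<i> * of_real x)) \<longlongrightarrow> 1) (at 0)"
    using pG0 by (intro tendsto_eq_intros) auto
  have tE: "(E \<longlongrightarrow> poly S 0) (at 0)"
    unfolding E_def using pG0 by (intro tendsto_eq_intros) auto
  have "eventually (\<lambda>x. poly G (\<i> * of_real x) \<noteq> 0) (at (0::real))"
    by (rule tendsto_imp_eventually_ne[OF tG]) simp
  then have expansion: "eventually (\<lambda>x. Re (u x) - 1 = x ^ 2 * (x * Im (E x) - b) \<and>
      Im (u x) + a * x = x ^ 3 * (- Re (E x))) (at 0)"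
  proof eventually_elim
    case (elim x)
    have cube: "(\<i> * complex_of_real x) ^ 3 * E x = - \<i> * of_real (x ^ 3) * E x"
      by (simp add: power3_eq_cube algebra_simps)
    have u_eq: "u x = 1 - of_real a * (\<i> * of_real x) + of_real b * (\<i> * of_real x) ^ 2
        + (\<i> * of_real x) ^ 3 * E x"
      using S[OF elim] unfolding u_def E_def quadratic_coeff
      unfolding \<open>coeff G 1 = of_real a\<close> by simp
    show ?case
      unfolding u_eq cube by (simp add: power2_eq_square power3_eq_cube algebra_simps)
  qed
  have "eventually (\<lambda>x. x ^ 2 * (x * Im (E x) - b) = Re (u x) - 1) (at 0)"
    using expansion by eventually_elim simp
  moreover have "(\<lambda>x. x ^ 2 * (x * Im (E x) - b)) \<in> O[at 0](\<lambda>x. x ^ 2)"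
    by (rule bigo_mult_convergent[where c = "0 * Im (poly S 0) - b"]) (intro tendsto_intros tE)
  ultimately show "(\<lambda>x. Re (u x) - 1) \<in> O[at 0](\<lambda>x. x ^ 2)"
    by (rule landau_o.big.in_cong[THEN iffD1])
  have "eventually (\<lambda>x. x ^ 3 * (- Re (E x)) = Im (u x) + Re (coeff G 1) * x) (at 0)"
    using expansion unfolding a_def by eventually_elim simp
  moreover have "(\<lambda>x. x ^ 3 * (- Re (E x))) \<in> O[at 0](\<lambda>x. x ^ 3)"
    by (rule bigo_mult_convergent[where c = "- Re (poly S 0)"]) (intro tendsto_intros tE)
  ultimately show "(\<lambda>x. Im (u x) + Re (coeff G 1) * x) \<in> O[at 0](\<lambda>x. x ^ 3)"
    by (rule landau_o.big.in_cong[THEN iffD1])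
qed

lemma bigo_shift_power:
  fixes R :: "real \<Rightarrow> real"
  assumes "R \<in> O[at 0](\<lambda>x. x ^ q)" and "p + q = k"
  shows "(\<lambda>x. K * x ^ p * R x) \<in> O[at 0](\<lambda>x. x ^ k)"
proof -
  have "(\<lambda>x. x ^ p * R x) \<in> O[at 0](\<lambda>x. x ^ p * x ^ q)"
    using assms(1) by (rule landau_o.big.mult_left)
  then have "(\<lambda>x. K * (x ^ p * R x)) \<in> O[at 0](\<lambda>x. x ^ k)"
    by (cases "K = 0") (simp_all add: power_add[symmetric] assms(2))
  then show ?thesis
    by (simp add: mult.assoc)
qed

(* Abstract flatness statement for the odd exponent 2m+1: then (ix)^(2m+1) is imaginary and the
   linear term of Im (u x) produces the leading term of order x^(2m+2). *)
lemma flat_delay_odd: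
  fixes f :: "real \<Rightarrow> real" and u :: "real \<Rightarrow> complex" and \<kappa> a :: real
  assumes "eventually (\<lambda>x. f x = 1 - \<kappa> * Re ((\<i> * of_real x) ^ (2 * m + 1) * u x)) (at 0)"
      and "(\<lambda>x. Im (u x) + a * x) \<in> O[at 0](\<lambda>x. x ^ 3)"
  shows "(\<lambda>x. f x - 1 - ((-1) ^ (m + 1) * \<kappa> * a) * x ^ (2 * (m + 1))) \<in> O[at 0](\<lambda>x. x ^ (2 * m + 4))"
proof -
  have i_pow: "(\<i> * of_real x) ^ (2 * m + 1) = \<i> * of_real ((-1) ^ m * x ^ (2 * m + 1))" for x
    by (simp add: power_mult_distrib power_mult power_minus[of "(complex_of_real x)\<^sup>2"])
  have "eventually (\<lambda>x. (-1) ^ m * \<kappa> * x ^ (2 * m + 1) * (Im (u x) + a * x)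
      = f x - 1 - ((-1) ^ (m + 1) * \<kappa> * a) * x ^ (2 * (m + 1))) (at 0)"
    using assms(1) by eventually_elim (simp add: i_pow algebra_simps)
  moreover have "(\<lambda>x. (-1) ^ m * \<kappa> * x ^ (2 * m + 1) * (Im (u x) + a * x)) \<in> O[at 0](\<lambda>x. x ^ (2 * m + 4))"
    by (rule bigo_shift_power[OF assms(2)]) simp
  ultimately show ?thesis
    by (rule landau_o.big.in_cong[THEN iffD1])
qed

(* Abstract flatness statement for the even exponent 2m+2: then (ix)^(2m+2) is real and the
   constant term of Re (u x) produces the leading term. *)
lemma flat_delay_even:
  fixes f :: "real \<Rightarrow> real" and u :: "real \<Rightarrow> complex" and \<kappa> :: real
  assumes "eventually (\<lambda>x. f x = 1 - \<kappa> * Re ((\<i> * of_real x) ^ (2 * (m + 1)) * u x)) (at 0)"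
      and "(\<lambda>x. Re (u x) - 1) \<in> O[at 0](\<lambda>x. x ^ 2)"
  shows "(\<lambda>x. f x - 1 - ((-1) ^ m * \<kappa>) * x ^ (2 * (m + 1))) \<in> O[at 0](\<lambda>x. x ^ (2 * m + 4))"
proof -
  have i_pow: "(\<i> * of_real x) ^ (2 * (m + 1)) = of_real ((-1) ^ (m + 1) * x ^ (2 * (m + 1)))" for x
    unfolding power_mult
    by (simp add: power_mult_distrib power_minus[of "(complex_of_real x)\<^sup>2"] del: power_Suc)
  have "eventually (\<lambda>x. (-1) ^ m * \<kappa> * x ^ (2 * (m + 1)) * (Re (u x) - 1)
      = f x - 1 - ((-1) ^ m * \<kappa>) * x ^ (2 * (m + 1))) (at 0)"
    using assms(1) by eventually_elim (simp add: i_pow algebra_simps)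
  moreover have "(\<lambda>x. (-1) ^ m * \<kappa> * x ^ (2 * (m + 1)) * (Re (u x) - 1)) \<in> O[at 0](\<lambda>x. x ^ (2 * m + 4))"
    by (rule bigo_shift_power[OF assms(2)]) simp
  ultimately show ?thesis
    by (rule landau_o.big.in_cong[THEN iffD1])
qed

lemma Im_coeff_mult_real:
  fixes p q :: "complex poly"
  assumes "\<And>i. Im (coeff p i) = 0" and "\<And>i. Im (coeff q i) = 0"
  shows "Im (coeff (p * q) k) = 0"
  unfolding coeff_mult Im_sum by (rule sum.neutral) (simp add: assms)

lemma pade_denominator_product:
  fixes n m :: nat
  assumes "0 < n + m"
  defines "G \<equiv> kummer_poly 1 n (n + m) * kummer_poly (-1) m (n + m)"
  shows "coeff G 0 = 1" and "Im (coeff G i) = 0" and "Re (coeff G 1) = (real n - real m) / real (n + m)"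
proof -
  have "fact (n + m) = real (n + m) * fact (n + m - 1)"
    using assms(1) by (simp add: fact_reduce)
  then have coeff1: "kummer_coeff \<sigma> r (n + m) 1 = \<sigma> * real r / real (n + m)" for \<sigma> r
    by (simp add: kummer_coeff_def)
  show "coeff G 0 = 1"
    by (simp add: G_def coeff_mult coeff_kummer_poly kummer_coeff_def)
  show "Im (coeff G i) = 0"
    unfolding G_def by (rule Im_coeff_mult_real) (simp_all add: coeff_kummer_poly)
  have "coeff G 1 = of_real (kummer_coeff 1 n (n + m) 0 * kummer_coeff (-1) m (n + m) 1
                  + kummer_coeff 1 n (n + m) 1 * kummer_coeff (-1) m (n + m) 0)"
    by (simp add: G_def coeff_mult coeff_kummer_poly)
  then show "Re (coeff G 1) = (real n - real m) / real (n + m)"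
    by (simp only: Re_complex_of_real coeff1) (simp add: kummer_coeff_def diff_divide_distrib)
qed

lemma group_delay_pade:
  fixes n m :: nat
  defines "P \<equiv> kummer_poly 1 n (n + m)" and "Q \<equiv> kummer_poly (-1) m (n + m)"
    and "\<kappa> \<equiv> kummer_coeff 1 n (n + m) n * kummer_coeff (-1) m (n + m) m"
  shows "eventually (\<lambda>x. group_delay (padeH n m) x
     = 1 - \<kappa> * Re ((\<i> * of_real x) ^ (n + m) * (1 / poly (P * Q) (\<i> * of_real x)))) (at 0)"
proof -
  have H: "padeH n m = (\<lambda>s. poly Q s / poly P s)"
    by (simp add: padeH_def padeP_kummer padeQ_kummer P_def Q_def fun_eq_iff)
  have "poly P 0 = 1" "poly Q 0 = 1"
    by (simp_all add: P_def Q_def poly_0_coeff_0 coeff_kummer_poly kummer_coeff_def)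
  from group_delay_rational[OF this] show ?thesis
    unfolding H
  proof eventually_elim
    case (elim x)
    have "poly (delay_numerator P Q) z / (poly P z * poly Q z) = of_real \<kappa> * (z ^ (n + m) * (1 / poly (P * Q) z))"
      for z :: complex
      using delay_numerator_pade[of n m] by (simp add: P_def Q_def \<kappa>_def poly_monom)
    moreover have "Re (of_real \<kappa> * w) = \<kappa> * Re w" for w
      by simp
    ultimately show ?case
      using elim by (simp only:)
  qed
qed

theorem theorem4:
  fixes n m :: nat
  assumes "m + 1 = n \<or> m + 2 = n"
  shows "\<exists>c::real. c \<noteq> 0 \<and>
    (\<lambda>w. group_delay (padeH n m) w - 1 - c * w ^ (2 * (m + 1)))
      \<in> O[at 0](\<lambda>w. w ^ (2 * m + 4))"
proof -
  define G where "G = kummer_poly 1 n (n + m) * kummer_poly (-1) m (n + m)"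
  define \<kappa> where "\<kappa> = kummer_coeff 1 n (n + m) n * kummer_coeff (-1) m (n + m) m"
  have "\<kappa> \<noteq> 0"
    by (simp add: \<kappa>_def kummer_coeff_def)
  have delay: "eventually (\<lambda>x. group_delay (padeH n m) x
      = 1 - \<kappa> * Re ((\<i> * of_real x) ^ (n + m) * (1 / poly G (\<i> * of_real x)))) (at 0)"
    using group_delay_pade[of n m] by (simp add: G_def \<kappa>_def)
  have "0 < n + m"
    using assms by auto
  note G = pade_denominator_product[OF this, folded G_def]
  note expansion = inverse_poly_on_imaginary_axis[OF G(1) G(2) G(2)]
  from assms show ?thesis
  proof
    assume "m + 1 = n"
    then have N: "n + m = 2 * m + 1" and "Re (coeff G 1) \<noteq> 0"
      using G(3) by auto
    have "(\<lambda>x. group_delay (padeH n m) x - 1 - ((-1) ^ (m + 1) * \<kappa> * Re (coeff G 1)) * x ^ (2 * (m + 1)))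
        \<in> O[at 0](\<lambda>x. x ^ (2 * m + 4))"
      using delay unfolding N by (rule flat_delay_odd[OF _ expansion(2)])
    moreover have "(-1) ^ (m + 1) * \<kappa> * Re (coeff G 1) \<noteq> 0"
      using \<open>\<kappa> \<noteq> 0\<close> \<open>Re (coeff G 1) \<noteq> 0\<close> by simp
    ultimately show ?thesis
      by blast
  next
    assume "m + 2 = n"
    then have N: "n + m = 2 * (m + 1)"
      by simp
    have "(\<lambda>x. group_delay (padeH n m) x - 1 - ((-1) ^ m * \<kappa>) * x ^ (2 * (m + 1)))
        \<in> O[at 0](\<lambda>x. x ^ (2 * m + 4))"
      using delay unfolding N by (rule flat_delay_even[OF _ expansion(1)])
    moreover have "(-1) ^ m * \<kappa> \<noteq> 0"
      using \<open>\<kappa> \<noteq> 0\<close> by simp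
    ultimately show ?thesis
      by blast
  qed
qed

end
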